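(* Let $\mathbb{F}$ be a field, $H$ a finite additive subgroup of $\mathbb{F}$, and $m,d$ positive integers with $d<|H|$. For every $\vec v\in\mathbb{F}^m$ and every polynomial $P\in\mathbb{F}[X_1,\dots,X_m]$ of individual degree at most $d$, $$\sum_{\vec\alpha\in H^m}P(\vec\alpha+\vec v)=\kappa\cdot a_0^m,$$ where $\kappa$ is the coefficient of $X_1^{|H|-1}\cdots X_m^{|H|-1}$ in $P$ and $a_0$ is the coefficient of the linear term $X$ in the polynomial $\prod_{h\in H}(X-h)$. In particular, if $P$ has total degree strictly less than $m(|H|-1)$, the sum equals $0$. *)

theory Defs
  imports "HOL-Computational_Algebra.Polynomial" "HOL-Library.FuncSet"
begin

text \<open>A polynomial in m variables X_0..X_(m-1) over a field is represented by its
coefficient function c on exponent vectors (nat => nat); only exponent vectors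
supported on {..<m} occur.\<close>

definition exps :: "nat \<Rightarrow> nat \<Rightarrow> (nat \<Rightarrow> nat) set" where
  "exps m d = {e. (\<forall>i<m. e i \<le> d) \<and> (\<forall>i. m \<le> i \<longrightarrow> e i = 0)}"

definition indiv_deg_le :: "nat \<Rightarrow> nat \<Rightarrow> ((nat \<Rightarrow> nat) \<Rightarrow> 'a::zero) \<Rightarrow> bool" where
  "indiv_deg_le m d c \<longleftrightarrow> (\<forall>e. c e \<noteq> 0 \<longrightarrow> e \<in> exps m d)"

definition mpoly_eval :: "nat \<Rightarrow> nat \<Rightarrow> ((nat \<Rightarrow> nat) \<Rightarrow> 'a::field) \<Rightarrow> (nat \<Rightarrow> 'a) \<Rightarrow> 'a" where
  "mpoly_eval m d c x = (\<Sum>e\<in>exps m d. c e * (\<Prod>i<m. x i ^ e i))"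

definition additive_subgroup :: "'a::ab_group_add set \<Rightarrow> bool" where
  "additive_subgroup H \<longleftrightarrow> 0 \<in> H \<and> (\<forall>x\<in>H. \<forall>y\<in>H. x + y \<in> H) \<and> (\<forall>x\<in>H. - x \<in> H)"

end

theory Submission
  imports Defs
begin

text \<open>For a univariate f of degree below |S|, Lagrange interpolation on S gives
coeff f (|S| - 1) as the sum of the values f(x) weighted by 1/\<Prod>(x - y).
When S = H is an additive subgroup, y \<mapsto> x - y permutes H - {x}, so every weight
equals 1/a0 with a0 = \<Prod>(H - {0}), which is also the linear coefficient of
\<Prod>(X - h). Hence \<Sum>(h\<in>H) (h + w)^k is a0 for k = |H| - 1 and 0 for smaller k.
A shifted multivariate sum splits monomialwise into products of such sums, and only
the monomial X_1^(|H|-1) ... X_m^(|H|-1) survives.\<close>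

lemma coeff_eq_sum_interpolation_weights:
  fixes f :: "'a::field poly"
  assumes fin: "finite S" and deg: "degree f < card S"
  shows "coeff f (card S - 1) = (\<Sum>x\<in>S. poly f x / (\<Prod>y\<in>S-{x}. x - y))"
proof -
  define L where "L x = (\<Prod>y\<in>S-{x}. [:- y, 1:])" for x
  define g where "g = (\<Sum>x\<in>S. smult (poly f x / (\<Prod>y\<in>S-{x}. x - y)) (L x))"
  have S_ne: "card S > 0" using deg by linarith
  have deg_L: "degree (L x) = card S - 1" if "x \<in> S" for x
    unfolding L_def using that fin by (subst degree_prod_sum_eq) auto
  have poly_L: "poly (L x) z = (if z = x then (\<Prod>y\<in>S-{x}. x - y) else 0)"
    if "x \<in> S" "z \<in> S" for x z
    using that fin by (auto simp: L_def poly_prod intro!: prod_zero)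
  have "f = g"
  proof (rule poly_eqI_degree[of S])
    fix z assume z: "z \<in> S"
    have nz: "(\<Prod>y\<in>S-{z}. z - y) \<noteq> 0" using fin by (simp add: prod_zero_iff)
    have "poly g z = (\<Sum>x\<in>S. if x = z then poly f z else 0)"
      unfolding g_def poly_sum using z nz by (auto simp: poly_L intro!: sum.cong)
    also have "\<dots> = poly f z" using fin z by simp
    finally show "poly f z = poly g z" ..
  next
    have "degree g \<le> card S - 1"
      unfolding g_def by (rule degree_sum_le[OF fin]) (metis deg_L degree_smult_le)
    thus "degree g < card S" using S_ne by linarith
  qed (fact deg)
  have lead_L: "coeff (L x) (card S - 1) = 1" if "x \<in> S" for x
    using lead_coeff_prod[of "\<lambda>y. [:- y, 1:]" "S-{x}"] deg_L[OF that] by (simp add: L_def)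
  have "coeff f (card S - 1) = coeff g (card S - 1)" using \<open>f = g\<close> by simp
  also have "\<dots> = (\<Sum>x\<in>S. poly f x / (\<Prod>y\<in>S-{x}. x - y))"
    unfolding g_def coeff_sum using lead_L by simp
  finally show ?thesis .
qed

lemma prod_diff_additive_subgroup:
  fixes H :: "'a::field set"
  assumes sg: "additive_subgroup H" and x: "x \<in> H"
  shows "(\<Prod>y\<in>H-{x}. x - y) = (\<Prod>(H - {0}))"
proof -
  have diff_in: "x - y \<in> H" if "y \<in> H" for y
    using sg x that unfolding additive_subgroup_def by (metis diff_conv_add_uminus)
  have "bij_betw (\<lambda>y. x - y) (H-{x}) (H-{0})"
    by (rule bij_betwI[where g="\<lambda>y. x - y"]) (auto simp: diff_in)
  thus ?thesis using prod.reindex_bij_betw[of "\<lambda>y. x - y" "H-{x}" "H-{0}" id] by simp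
qed

lemma coeff_1_prod_linear_additive_subgroup:
  fixes H :: "'a::field set"
  assumes fin: "finite H" and sg: "additive_subgroup H"
  shows "coeff (\<Prod>h\<in>H. [:- h, 1:]) 1 = (\<Prod>(H - {0}))"
proof -
  have zero: "0 \<in> H" using sg unfolding additive_subgroup_def by blast
  have "(\<Prod>h\<in>H. [:- h, 1:]) = [:0, 1:] * (\<Prod>h\<in>H-{0}. [:- h, 1:])"
    using prod.remove[OF fin zero, of "\<lambda>h. [:- h, 1:]"] by simp
  hence "coeff (\<Prod>h\<in>H. [:- h, 1:]) 1 = poly (\<Prod>h\<in>H-{0}. [:- h, 1:]) 0"
    by (simp add: mult_pCons_left poly_0_coeff_0)
  also have "\<dots> = (\<Prod>h\<in>H-{0}. 0 - h)" by (simp add: poly_prod)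
  also have "\<dots> = (\<Prod>(H - {0}))" using prod_diff_additive_subgroup[OF sg zero] .
  finally show ?thesis .
qed

lemma sum_poly_additive_subgroup:
  fixes H :: "'a::field set" and f :: "'a poly"
  assumes fin: "finite H" and sg: "additive_subgroup H" and deg: "degree f < card H"
  shows "(\<Sum>h\<in>H. poly f h) = coeff (\<Prod>h\<in>H. [:- h, 1:]) 1 * coeff f (card H - 1)"
proof -
  have "0 \<notin> H - {0}" by simp
  hence nz: "(\<Prod>(H - {0})) \<noteq> 0" using fin by (simp add: prod_zero_iff)
  have "coeff f (card H - 1) = (\<Sum>h\<in>H. poly f h / (\<Prod>(H - {0})))"
    using coeff_eq_sum_interpolation_weights[OF fin deg]
    by (simp add: prod_diff_additive_subgroup[OF sg])
  hence "(\<Sum>h\<in>H. poly f h) = (\<Prod>(H - {0})) * coeff f (card H - 1)"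
    using nz by (simp add: sum_divide_distrib[symmetric])
  thus ?thesis unfolding coeff_1_prod_linear_additive_subgroup[OF fin sg] .
qed

lemma sum_shifted_power_additive_subgroup:
  fixes H :: "'a::field set"
  assumes fin: "finite H" and sg: "additive_subgroup H" and k: "k < card H"
  shows "(\<Sum>h\<in>H. (h + w) ^ k)
           = (if k = card H - 1 then coeff (\<Prod>h\<in>H. [:- h, 1:]) 1 else 0)"
proof -
  have "(\<Sum>h\<in>H. (h + w) ^ k) = (\<Sum>h\<in>H. poly ([:w, 1:] ^ k) h)"
    by (simp add: poly_power add.commute)
  also have "\<dots> = coeff (\<Prod>h\<in>H. [:- h, 1:]) 1 * coeff ([:w, 1:] ^ k) (card H - 1)"
    using k by (intro sum_poly_additive_subgroup[OF fin sg]) (simp add: degree_linear_power)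
  also have "coeff ([:w, 1:] ^ k) (card H - 1) = (if k = card H - 1 then 1 else 0)"
    using k by (auto simp: coeff_linear_power degree_linear_power intro: coeff_eq_0)
  finally show ?thesis by simp
qed

lemma prod_sum_shifted_power_additive_subgroup:
  fixes H :: "'a::field set"
  assumes fin: "finite H" and sg: "additive_subgroup H" and e: "\<And>i. i < m \<Longrightarrow> e i < card H"
  shows "(\<Prod>i<m. \<Sum>h\<in>H. (h + v i) ^ e i)
           = (if \<forall>i<m. e i = card H - 1 then coeff (\<Prod>h\<in>H. [:- h, 1:]) 1 ^ m else 0)"
  using e by (auto simp: sum_shifted_power_additive_subgroup[OF fin sg] intro: prod_zero)

lemma finite_exps: "finite (exps m d)"
proof (rule finite_subset)
  show "exps m d \<subseteq> {e. \<forall>i. (i \<in> {..<m} \<longrightarrow> e i \<in> {..d}) \<and> (i \<notin> {..<m} \<longrightarrow> e i = 0)}"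
    by (auto simp: exps_def)
qed (intro finite_set_of_finite_funs finite_lessThan finite_atMost)

lemma sum_PiE_mpoly_eval:
  fixes H :: "'a::field set"
  assumes "finite H"
  shows "(\<Sum>\<alpha>\<in>PiE {..<m} (\<lambda>_. H). mpoly_eval m d c (\<lambda>i. \<alpha> i + v i))
           = (\<Sum>e\<in>exps m d. c e * (\<Prod>i<m. \<Sum>h\<in>H. (h + v i) ^ e i))"
proof -
  have "(\<Sum>\<alpha>\<in>PiE {..<m} (\<lambda>_. H). mpoly_eval m d c (\<lambda>i. \<alpha> i + v i))
      = (\<Sum>e\<in>exps m d. c e * (\<Sum>\<alpha>\<in>PiE {..<m} (\<lambda>_. H). \<Prod>i<m. (\<alpha> i + v i) ^ e i))"
    unfolding mpoly_eval_def by (subst sum.swap) (simp add: sum_distrib_left)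
  also have "\<dots> = (\<Sum>e\<in>exps m d. c e * (\<Prod>i<m. \<Sum>h\<in>H. (h + v i) ^ e i))"
    using assms by (subst prod_sum_PiE) auto
  finally show ?thesis .
qed

theorem lemmaC5:
  fixes H :: "'a::field set" and m d :: nat
    and v :: "nat \<Rightarrow> 'a" and c :: "(nat \<Rightarrow> nat) \<Rightarrow> 'a"
  assumes "finite H" and "additive_subgroup H"
    and "m > 0" and "d > 0" and "d < card H"
    and "indiv_deg_le m d c"
  shows "(\<Sum>\<alpha>\<in>PiE {..<m} (\<lambda>_. H). mpoly_eval m d c (\<lambda>i. \<alpha> i + v i))
           = c (\<lambda>i. if i < m then card H - 1 else 0)
             * (coeff (\<Prod>h\<in>H. [:- h, 1:]) 1) ^ m
       \<and> ((\<forall>e. c e \<noteq> 0 \<longrightarrow> (\<Sum>i<m. e i) < m * (card H - 1)) \<longrightarrow>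
           (\<Sum>\<alpha>\<in>PiE {..<m} (\<lambda>_. H). mpoly_eval m d c (\<lambda>i. \<alpha> i + v i)) = 0)"
proof -
  define a0 where "a0 = coeff (\<Prod>h\<in>H. [:- h, 1:]) 1"
  define E where "E = (\<lambda>i::nat. if i < m then card H - 1 else 0)"
  have monomial_sum: "(\<Prod>i<m. \<Sum>h\<in>H. (h + v i) ^ e i) = (if e = E then a0 ^ m else 0)"
    if e: "e \<in> exps m d" for e
  proof -
    have "e i < card H" if "i < m" for i using e that \<open>d < card H\<close> by (fastforce simp: exps_def)
    moreover have "(\<forall>i<m. e i = card H - 1) \<longleftrightarrow> e = E"
      using e by (auto simp: E_def exps_def fun_eq_iff)
    ultimately show ?thesis
      by (simp add: prod_sum_shifted_power_additive_subgroup[OF assms(1,2)] a0_def)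
  qed
  have "(\<Sum>\<alpha>\<in>PiE {..<m} (\<lambda>_. H). mpoly_eval m d c (\<lambda>i. \<alpha> i + v i))
      = (\<Sum>e\<in>exps m d. if e = E then c E * a0 ^ m else 0)"
    unfolding sum_PiE_mpoly_eval[OF assms(1)] by (intro sum.cong) (simp_all add: monomial_sum)
  also have "\<dots> = c E * a0 ^ m"
    using \<open>indiv_deg_le m d c\<close> by (auto simp: sum.delta' finite_exps indiv_deg_le_def)
  finally have sum_eq: "(\<Sum>\<alpha>\<in>PiE {..<m} (\<lambda>_. H). mpoly_eval m d c (\<lambda>i. \<alpha> i + v i))
      = c E * a0 ^ m" .
  have "(\<forall>e. c e \<noteq> 0 \<longrightarrow> (\<Sum>i<m. e i) < m * (card H - 1)) \<longrightarrow> c E = 0"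
    by (auto simp: E_def)
  with sum_eq show ?thesis by (simp add: E_def a0_def)
qed

end
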